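(* Let $n \ge 1$ and let $X_1,\ldots,X_n$ be independent Rademacher random variables (each $X_i$ takes the values $+1$ and $-1$ with probability $1/2$ each). Then \[ \mathbb{P}\Big(\sum_{i=1}^{n} X_i > \frac{\sqrt{n}}{2}\Big) \ge \frac{3}{32}. \] *)

theory Defs
  imports "HOL-Probability.Probability"
begin

end

theory Submission
  imports Defs
begin

text \<open>
  Since the law of \<open>(X\<^sub>1,\<dots>,X\<^sub>n)\<close> is uniform on \<open>{-1,1}\<^sup>n\<close>, it suffices to count
  sign vectors. For \<open>S = \<Sum> e\<^sub>i\<close> over all sign vectors one has \<open>\<Sum> S\<^sup>2 = n 2\<^sup>n\<close> and
  \<open>\<Sum> S\<^sup>4 = (3n\<^sup>2 - 2n) 2\<^sup>n\<close>. The quartic \<open>u\<^sup>2 - n/4 - u\<^sup>4/(8n)\<close> is bounded by \<open>2n\<close>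
  everywhere and by \<open>0\<close> on \<open>|u| \<le> \<surd>n/2\<close>; summing this bound over all sign vectors
  gives \<open>3n/8 \<cdot> 2\<^sup>n \<le> 2n \<cdot> #{|S| > \<surd>n/2}\<close>, and by symmetry half of these vectors
  have \<open>S > \<surd>n/2\<close>.
\<close>

text \<open>\<open>sign_sum I g = 2\<^bsup>|I|\<^esup> \<cdot> E g(\<Sum>\<^sub>i\<^sub>\<in>\<^sub>I \<epsilon>\<^sub>i)\<close> for independent uniform signs \<open>\<epsilon>\<^sub>i\<close>.\<close>

definition sign_sum :: "'i set \<Rightarrow> (real \<Rightarrow> real) \<Rightarrow> real" where
  "sign_sum I g = (\<Sum>e\<in>PiE I (\<lambda>_. {-1,1}). g (\<Sum>j\<in>I. e j))"

lemma sign_sum_empty [simp]: "sign_sum {} g = g 0"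
  by (simp add: sign_sum_def)

lemma sign_sum_insert:
  fixes I :: "'i set"
  assumes "finite I" "i \<notin> I"
  shows "sign_sum (insert i I) g = sign_sum I (\<lambda>u. g (u + 1) + g (u - 1))"
proof -
  let ?S = "\<lambda>_. {-1, 1::real}"
  have "sign_sum (insert i I) g
      = (\<Sum>(y, f)\<in>?S i \<times> PiE I ?S. g (\<Sum>j\<in>insert i I. (f(i := y)) j))"
    unfolding sign_sum_def PiE_insert_eq
    by (subst sum.reindex[OF inj_combinator[OF assms(2)]]) (simp add: comp_def case_prod_beta)
  also have "\<dots> = (\<Sum>(y, f)\<in>?S i \<times> PiE I ?S. g (y + (\<Sum>j\<in>I. f j)))"
  proof (intro sum.cong refl, clarify)
    fix y and f :: "'i \<Rightarrow> real"
    have "(\<Sum>j\<in>I. (f(i := y)) j) = (\<Sum>j\<in>I. f j)"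
      using assms(2) by (intro sum.cong) auto
    then show "g (\<Sum>j\<in>insert i I. (f(i := y)) j) = g (y + (\<Sum>j\<in>I. f j))"
      using assms by simp
  qed
  also have "\<dots> = (\<Sum>f\<in>PiE I ?S. \<Sum>y\<in>?S i. g (y + (\<Sum>j\<in>I. f j)))"
    by (simp add: sum.cartesian_product[symmetric] sum.swap[of _ "?S i"] sum.distrib)
  also have "\<dots> = sign_sum I (\<lambda>u. g (u + 1) + g (u - 1))"
    unfolding sign_sum_def by (intro sum.cong) (simp_all add: algebra_simps)
  finally show ?thesis .
qed

lemma sign_sum_add: "sign_sum I (\<lambda>u. f u + g u) = sign_sum I f + sign_sum I g"
  by (simp add: sign_sum_def sum.distrib)

lemma sign_sum_cmult: "sign_sum I (\<lambda>u. c * f u) = c * sign_sum I f"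
  by (simp add: sign_sum_def sum_distrib_left)

lemma sign_sum_mono: "(\<And>u. f u \<le> g u) \<Longrightarrow> sign_sum I f \<le> sign_sum I g"
  by (simp add: sign_sum_def sum_mono)

lemma sign_sum_const: "finite I \<Longrightarrow> sign_sum I (\<lambda>_. c) = c * 2 ^ card I"
  by (simp add: sign_sum_def card_PiE)

lemma sign_sum_reflect:
  assumes "finite I"
  shows "sign_sum I (\<lambda>u. g (- u)) = sign_sum I g"
  using assms
proof (induction I arbitrary: g rule: finite_induct)
  case (insert i I)
  then show ?case
    using insert.IH[of "\<lambda>u. g (u + 1)"] insert.IH[of "\<lambda>u. g (u - 1)"]
    by (simp add: sign_sum_insert sign_sum_add add.commute)
qed simp

lemma sign_sum_square:
  assumes "finite I"
  shows "sign_sum I (\<lambda>u. u ^ 2) = card I * 2 ^ card I"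
  using assms
proof (induction I rule: finite_induct)
  case (insert i I)
  have binomial: "(\<lambda>u::real. (u + 1) ^ 2 + (u - 1) ^ 2) = (\<lambda>u. 2 * u ^ 2 + 2 * 1)"
    by (simp add: algebra_simps power2_eq_square)
  have "sign_sum (insert i I) (\<lambda>u. u ^ 2) = 2 * sign_sum I (\<lambda>u. u ^ 2) + 2 * sign_sum I (\<lambda>_. 1)"
    unfolding sign_sum_insert[OF insert.hyps] binomial by (simp only: sign_sum_add sign_sum_cmult)
  then show ?case
    using insert by (simp add: sign_sum_const)
qed simp

lemma sign_sum_fourth_power:
  assumes "finite I"
  shows "sign_sum I (\<lambda>u. u ^ 4) = (3 * real (card I) ^ 2 - 2 * real (card I)) * 2 ^ card I"
  using assms
proof (induction I rule: finite_induct)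
  case (insert i I)
  have binomial: "(\<lambda>u::real. (u + 1) ^ 4 + (u - 1) ^ 4) = (\<lambda>u. 2 * u ^ 4 + (12 * u ^ 2 + 2 * 1))"
    by (simp add: algebra_simps power4_eq_xxxx power2_eq_square)
  have "sign_sum (insert i I) (\<lambda>u. u ^ 4)
      = 2 * sign_sum I (\<lambda>u. u ^ 4) + (12 * sign_sum I (\<lambda>u. u ^ 2) + 2 * sign_sum I (\<lambda>_. 1))"
    unfolding sign_sum_insert[OF insert.hyps] binomial by (simp only: sign_sum_add sign_sum_cmult)
  then show ?case
    using insert by (simp add: sign_sum_const sign_sum_square) (simp add: algebra_simps power2_eq_square)
qed simp

lemma quartic_le_abs_tail_indicator:
  fixes n u :: real
  assumes "n > 0"
  shows "u ^ 2 - n / 4 - u ^ 4 / (8 * n) \<le> 2 * n * of_bool (sqrt n / 2 < \<bar>u\<bar>)"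
proof (cases "sqrt n / 2 < \<bar>u\<bar>")
  case True
  have "0 \<le> (u ^ 2 - 4 * n) ^ 2" by simp
  then have "u ^ 2 - u ^ 4 / (8 * n) \<le> 2 * n"
    using assms by (simp add: field_simps power2_eq_square power4_eq_xxxx)
  then show ?thesis using True assms by simp
next
  case False
  then have "\<bar>u\<bar> ^ 2 \<le> (sqrt n / 2) ^ 2"
    by (intro power_mono) auto
  then have "u ^ 2 \<le> n / 4"
    using assms by (simp add: power_divide)
  moreover have "0 \<le> u ^ 4 / (8 * n)" using assms by simp
  ultimately show ?thesis using False by simp
qed

lemma sign_sum_upper_tail_ge:
  assumes "finite I" "I \<noteq> {}"
  shows "3 / 32 * 2 ^ card I \<le> sign_sum I (\<lambda>u. of_bool (sqrt (card I) / 2 < u))"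
proof -
  define n where "n = real (card I)"
  define t where "t = sqrt n / 2"
  have n_pos: "n > 0" using assms by (simp add: n_def card_gt_0_iff)
  have "0 \<le> t" by (simp add: t_def n_def)
  then have "(\<lambda>u. of_bool (t < \<bar>u\<bar>)) = (\<lambda>u. of_bool (t < u) + of_bool (t < - u) :: real)"
    by (intro ext) (auto simp: abs_if of_bool_def)
  then have abs_tail: "sign_sum I (\<lambda>u. of_bool (t < \<bar>u\<bar>)) = 2 * sign_sum I (\<lambda>u. of_bool (t < u))"
    using sign_sum_reflect[OF assms(1), of "\<lambda>u. of_bool (t < u)"] by (simp add: sign_sum_add)
  have quartic_eq: "(\<lambda>u. u ^ 2 - n / 4 - u ^ 4 / (8 * n))
      = (\<lambda>u. u ^ 2 + ((- n / 4) * 1 + (- 1 / (8 * n)) * u ^ 4))"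
    by (simp add: field_simps)
  have "(3 * n / 8) * 2 ^ card I \<le> (n - n / 4 - (3 * n ^ 2 - 2 * n) / (8 * n)) * 2 ^ card I"
    using n_pos by (simp add: field_simps power2_eq_square)
  also have "\<dots> = sign_sum I (\<lambda>u. u ^ 2 - n / 4 - u ^ 4 / (8 * n))"
    unfolding quartic_eq using assms(1)
    by (simp only: sign_sum_add sign_sum_cmult sign_sum_const sign_sum_square
        sign_sum_fourth_power n_def) (simp add: field_simps)
  also have "\<dots> \<le> sign_sum I (\<lambda>u. 2 * n * of_bool (t < \<bar>u\<bar>))"
    using quartic_le_abs_tail_indicator[OF n_pos] by (intro sign_sum_mono) (simp add: t_def)
  also have "\<dots> = 4 * n * sign_sum I (\<lambda>u. of_bool (t < u))"
    by (simp add: sign_sum_cmult abs_tail)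
  finally show ?thesis
    using n_pos by (simp add: n_def t_def)
qed

context prob_space
begin

lemma rademacher_cylinder_prob:
  fixes X :: "'i \<Rightarrow> 'a \<Rightarrow> real"
  assumes indep: "indep_vars (\<lambda>_. borel) X I" and "finite I"
    and coin: "\<And>i c. i \<in> I \<Longrightarrow> c \<in> {-1, 1} \<Longrightarrow> prob {\<omega> \<in> space M. X i \<omega> = c} = 1 / 2"
    and e: "e \<in> PiE I (\<lambda>_. {-1, 1})"
  shows "prob {\<omega> \<in> space M. \<forall>i\<in>I. X i \<omega> = e i} = (1 / 2) ^ card I"
proof (cases "I = {}")
  case False
  have "{\<omega> \<in> space M. \<forall>i\<in>I. X i \<omega> = e i} = (\<Inter>i\<in>I. X i -` {e i} \<inter> space M)"
    using False by auto
  also have "prob \<dots> = (\<Prod>i\<in>I. prob (X i -` {e i} \<inter> space M))"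
    using indep_varsD_finite[OF indep False \<open>finite I\<close>, of "\<lambda>i. {e i}"] by simp
  also have "\<dots> = (\<Prod>i\<in>I. 1 / 2)"
  proof (intro prod.cong refl)
    fix i assume "i \<in> I"
    then have "e i \<in> {-1, 1}" using e by auto
    moreover have "X i -` {e i} \<inter> space M = {\<omega> \<in> space M. X i \<omega> = e i}" by auto
    ultimately show "prob (X i -` {e i} \<inter> space M) = 1 / 2"
      using coin \<open>i \<in> I\<close> by presburger
  qed
  finally show ?thesis by simp
qed (simp add: prob_space)

lemma rademacher_sum_prob_ge:
  fixes X :: "'i \<Rightarrow> 'a \<Rightarrow> real"
  assumes indep: "indep_vars (\<lambda>_. borel) X I" and "finite I"
    and coin: "\<And>i c. i \<in> I \<Longrightarrow> c \<in> {-1, 1} \<Longrightarrow> prob {\<omega> \<in> space M. X i \<omega> = c} = 1 / 2"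
    and A: "A \<in> sets borel"
  shows "sign_sum I (indicator A) / 2 ^ card I \<le> prob {\<omega> \<in> space M. (\<Sum>i\<in>I. X i \<omega>) \<in> A}"
proof -
  define E where "E = PiE I (\<lambda>_. {-1, 1::real})"
  define G where "G = {e \<in> E. (\<Sum>j\<in>I. e j) \<in> A}"
  define C where "C e = {\<omega> \<in> space M. \<forall>i\<in>I. X i \<omega> = e i}" for e
  have rv: "\<And>i. i \<in> I \<Longrightarrow> X i \<in> borel_measurable M"
    using indep by (auto simp: indep_vars_def2)
  have finite_E: "finite E"
    using \<open>finite I\<close> by (simp add: E_def finite_PiE)
  then have finite_G: "finite G"
    by (simp add: G_def)
  have C_events: "C e \<in> events" for e
    unfolding C_def using rv \<open>finite I\<close> by measurable
  have C_disjoint: "disjoint_family_on C G"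
    unfolding disjoint_family_on_def
  proof (intro ballI impI)
    fix e e' assume "e \<in> G" "e' \<in> G" "e \<noteq> e'"
    then obtain i where "i \<in> I" "e i \<noteq> e' i"
      unfolding G_def E_def by (metis (no_types, lifting) PiE_ext mem_Collect_eq)
    then show "C e \<inter> C e' = {}" by (auto simp: C_def)
  qed
  have "sign_sum I (indicator A) = (\<Sum>e\<in>E. if (\<Sum>j\<in>I. e j) \<in> A then 1 else 0)"
    by (simp add: sign_sum_def E_def indicator_def of_bool_def)
  also have "\<dots> = card G"
    unfolding G_def using finite_E by (simp flip: sum.inter_filter)
  finally have count: "sign_sum I (indicator A) = card G" .
  have "sign_sum I (indicator A) / 2 ^ card I = (\<Sum>e\<in>G. prob (C e))"
    using rademacher_cylinder_prob[OF indep \<open>finite I\<close> coin]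
    by (simp add: count G_def E_def C_def power_one_over)
  also have "\<dots> = prob (\<Union>e\<in>G. C e)"
    using finite_G C_disjoint C_events by (intro measure_finite_Union[symmetric]) auto
  also have "\<dots> \<le> prob {\<omega> \<in> space M. (\<Sum>i\<in>I. X i \<omega>) \<in> A}"
  proof (intro finite_measure_mono)
    show "(\<Union>e\<in>G. C e) \<subseteq> {\<omega> \<in> space M. (\<Sum>i\<in>I. X i \<omega>) \<in> A}"
      by (auto simp: G_def C_def)
    show "{\<omega> \<in> space M. (\<Sum>i\<in>I. X i \<omega>) \<in> A} \<in> events"
      using rv A by measurable
  qed
  finally show ?thesis .
qed

end

theorem lemma2:
  fixes M :: "'a measure" and X :: "nat \<Rightarrow> 'a \<Rightarrow> real" and n :: nat
  assumes "prob_space M"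
    and "n \<ge> 1"
    and "prob_space.indep_vars M (\<lambda>_. borel) X {1..n}"
    and "\<And>i. i \<in> {1..n} \<Longrightarrow> measure M {\<omega> \<in> space M. X i \<omega> = 1} = 1/2"
    and "\<And>i. i \<in> {1..n} \<Longrightarrow> measure M {\<omega> \<in> space M. X i \<omega> = -1} = 1/2"
  shows "measure M {\<omega> \<in> space M. (\<Sum>i=1..n. X i \<omega>) > sqrt (real n) / 2} \<ge> 3/32"
proof -
  interpret prob_space M by fact
  let ?t = "sqrt (real n) / 2"
  have "indicator {?t<..} = (\<lambda>u. of_bool (?t < u) :: real)"
    by (auto simp: indicator_def)
  then have "3 / 32 \<le> sign_sum {1..n} (indicator {?t<..}) / 2 ^ n"
    using sign_sum_upper_tail_ge[of "{1..n}"] \<open>n \<ge> 1\<close> by (simp add: field_simps)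
  also have "\<dots> \<le> prob {\<omega> \<in> space M. (\<Sum>i=1..n. X i \<omega>) \<in> {?t<..}}"
    using rademacher_sum_prob_ge[OF assms(3), of "{?t<..}"] assms(4,5) by auto
  finally show ?thesis by simp
qed

end
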